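(* Let $p,q$ be positive integers with $p>2q$, and let $F$ be a triangle-free graph. Then the following are equivalent: (1) every clique blowup $G$ of $F$ satisfies $\chi(G)\leq\lceil\frac{p}{2q}\omega(G)\rceil$; (2) every clique blowup $G'$ of $F$ with $\omega(G')\leq\max\{\frac{2q(p-q-2)}{p-2q},\,2q\}$ satisfies $\chi(G')\leq\lceil\frac{p}{2q}\omega(G')\rceil$.
   Context: All graphs are finite and simple. $\chi(G)$ denotes the chromatic number and $\omega(G)$ the clique number (maximum size of a set of pairwise adjacent vertices) of $G$. Substituting a vertex $v$ of a graph $H$ by a graph $K$ produces the graph with vertex set $V(K)\cup V(H-v)$ and edge set $E(K)\cup E(H-v)\cup\{xy : x\in V(K),\ y\in N_H(v)\}$. A clique blowup of a graph $H$ is a graph obtained from $H$ by substituting every vertex of $H$ by a clique (a complete graph), where these cliques are allowed to be empty. *)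

theory Defs
  imports Complex_Main
begin

definition simple_graph :: "'a set \<Rightarrow> ('a \<Rightarrow> 'a \<Rightarrow> bool) \<Rightarrow> bool" where
  "simple_graph V E \<longleftrightarrow> finite V \<and>
     (\<forall>x y. E x y \<longrightarrow> x \<in> V \<and> y \<in> V \<and> x \<noteq> y \<and> E y x)"

definition triangle_free :: "'a set \<Rightarrow> ('a \<Rightarrow> 'a \<Rightarrow> bool) \<Rightarrow> bool" where
  "triangle_free V E \<longleftrightarrow>
     \<not> (\<exists>x\<in>V. \<exists>y\<in>V. \<exists>z\<in>V. E x y \<and> E y z \<and> E x z)"

definition is_clique :: "'a set \<Rightarrow> ('a \<Rightarrow> 'a \<Rightarrow> bool) \<Rightarrow> 'a set \<Rightarrow> bool" where
  "is_clique V E K \<longleftrightarrow> K \<subseteq> V \<and> (\<forall>x\<in>K. \<forall>y\<in>K. x \<noteq> y \<longrightarrow> E x y)"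

definition clique_number :: "'a set \<Rightarrow> ('a \<Rightarrow> 'a \<Rightarrow> bool) \<Rightarrow> nat" where
  "clique_number V E = Max {card K | K. is_clique V E K}"

definition proper_colouring :: "'a set \<Rightarrow> ('a \<Rightarrow> 'a \<Rightarrow> bool) \<Rightarrow> nat \<Rightarrow> ('a \<Rightarrow> nat) \<Rightarrow> bool" where
  "proper_colouring V E k c \<longleftrightarrow> (\<forall>x\<in>V. c x < k) \<and>
     (\<forall>x\<in>V. \<forall>y\<in>V. E x y \<longrightarrow> c x \<noteq> c y)"

definition chromatic_number :: "'a set \<Rightarrow> ('a \<Rightarrow> 'a \<Rightarrow> bool) \<Rightarrow> nat" where
  "chromatic_number V E = (LEAST k. \<exists>c. proper_colouring V E k c)"

text \<open>Clique blowup of (V,E) where vertex v is substituted by a clique of size n v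
  (possibly 0). Every clique blowup is isomorphic to one of this form.\<close>
definition blowup_verts :: "'a set \<Rightarrow> ('a \<Rightarrow> nat) \<Rightarrow> ('a \<times> nat) set" where
  "blowup_verts V n = {(v, i). v \<in> V \<and> i < n v}"

definition blowup_adj :: "'a set \<Rightarrow> ('a \<Rightarrow> 'a \<Rightarrow> bool) \<Rightarrow> ('a \<Rightarrow> nat)
    \<Rightarrow> ('a \<times> nat) \<Rightarrow> ('a \<times> nat) \<Rightarrow> bool" where
  "blowup_adj V E n x y \<longleftrightarrow> x \<in> blowup_verts V n \<and> y \<in> blowup_verts V n \<and>
     ((fst x = fst y \<and> snd x \<noteq> snd y) \<or> E (fst x) (fst y))"

end

theory Submission
  imports Defs
begin

text \<open>
  In a clique blowup \<open>G\<^sub>n\<close> of a triangle-free graph every clique lies over a vertex or an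
  edge, so \<open>\<omega>(G\<^sub>n) \<le> w\<close> just says \<open>n v \<le> w\<close> for vertices and \<open>n u + n v \<le> w\<close> for edges.
  If \<open>\<omega>(G\<^sub>n) = w > 2q\<close>, identify the clique over \<open>v\<close> with the interval \<open>[0, n v)\<close> and let
  \<open>m v\<close> count its points in a window of width \<open>2q\<close> around \<open>w/2\<close>. Then \<open>\<omega>(G\<^sub>m) \<le> 2q\<close> and
  \<open>\<omega>(G\<^sub>d) \<le> w - 2q\<close> for \<open>d = n - m\<close>, and colouring the two parts with disjoint palettes gives
  \<open>\<chi>(G\<^sub>n) \<le> p + \<lceil>p(w - 2q)/2q\<rceil> = \<lceil>pw/2q\<rceil>\<close> by induction on \<open>w\<close>. So the bound only needs
  checking for \<open>\<omega> \<le> 2q\<close>.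
\<close>

text \<open>For \<open>q \<le> c\<close>, \<open>window_part q c x\<close> is the length of \<open>[0, x) \<inter> [c - q, c + q)\<close>.\<close>
definition window_part :: "nat \<Rightarrow> nat \<Rightarrow> nat \<Rightarrow> nat" where
  "window_part q c x = min (2 * q) (x + q - c)"

lemma window_part_le_2q: "window_part q c x \<le> 2 * q"
  unfolding window_part_def by simp

lemma window_part_le: "q \<le> c \<Longrightarrow> window_part q c x \<le> x"
  unfolding window_part_def by simp

lemma window_part_rest_le:
  "c + q \<le> w \<Longrightarrow> x \<le> w \<Longrightarrow> x - window_part q c x \<le> w - 2 * q"
  unfolding window_part_def by linarith

lemma window_part_add_le:
  "x + y \<le> c + c' \<Longrightarrow> window_part q c x + window_part q c' y \<le> 2 * q"
  unfolding window_part_def by linarith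

lemma window_part_rest_add_le:
  assumes "q \<le> c" "q \<le> c'" "c + c' \<le> w" "x + y \<le> w"
  shows "(x - window_part q c x) + (y - window_part q c' y) \<le> w - 2 * q"
  using assms unfolding window_part_def by linarith

text \<open>\<open>\<lfloor>w/2\<rfloor>\<close> is rounded up only for \<open>x > \<lfloor>w/2\<rfloor>\<close>; at most one end of an edge is that large.\<close>
definition window_centre :: "nat \<Rightarrow> nat \<Rightarrow> nat" where
  "window_centre w x = (if w div 2 < x then w - w div 2 else w div 2)"

lemma window_centre_bounds:
  assumes "2 * q \<le> w"
  shows "q \<le> window_centre w x" "window_centre w x + q \<le> w"
proof -
  have "q \<le> w div 2" using div_le_mono[OF assms, of 2] by simp
  moreover have "2 * (w div 2) \<le> w" by simp
  ultimately show "q \<le> window_centre w x" and "window_centre w x + q \<le> w"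
    unfolding window_centre_def by auto
qed

lemma window_centre_add:
  assumes "x + y \<le> w"
  shows "x + y \<le> window_centre w x + window_centre w y"
    and "window_centre w x + window_centre w y \<le> w"
proof -
  have "2 * (w div 2) \<le> w" "w \<le> 2 * (w div 2) + 1" by simp_all
  then show "x + y \<le> window_centre w x + window_centre w y"
    and "window_centre w x + window_centre w y \<le> w"
    using assms unfolding window_centre_def by auto
qed

lemma finite_clique_sizes: "finite V \<Longrightarrow> finite {card K | K. is_clique V E K}"
  by (rule finite_subset[of _ "card ` Pow V"]) (auto simp: is_clique_def)

lemma clique_number_ge:
  assumes "finite V" "is_clique V E K"
  shows "card K \<le> clique_number V E"
  unfolding clique_number_def using assms finite_clique_sizes by (intro Max_ge) auto

lemma clique_number_le:
  assumes "finite V" "\<And>K. is_clique V E K \<Longrightarrow> card K \<le> B"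
  shows "clique_number V E \<le> B"
proof -
  have "is_clique V E {}"
    unfolding is_clique_def by simp
  then show ?thesis
    unfolding clique_number_def using assms finite_clique_sizes by (subst Max_le_iff) auto
qed

lemma triangle_free_clique_cases:
  assumes "simple_graph V E" "triangle_free V E" "is_clique V E A"
  obtains "A = {}" | v where "v \<in> V" "A = {v}" | u v where "E u v" "A = {u, v}"
proof (cases "A = {}")
  case False
  then obtain u where u: "u \<in> A" by blast
  show ?thesis
  proof (cases "A = {u}")
    case True
    then show ?thesis using that(2) assms(3) unfolding is_clique_def by blast
  next
    case False
    then obtain v where v: "v \<in> A" "v \<noteq> u" using u by blast
    have "A \<subseteq> {u, v}"
    proof
      fix z assume z: "z \<in> A"
      show "z \<in> {u, v}"
      proof (rule ccontr)
        assume "z \<notin> {u, v}"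
        then have "E u v" "E v z" "E u z"
          using u v z assms(3) unfolding is_clique_def by auto
        moreover have "u \<in> V" "v \<in> V" "z \<in> V"
          using u v z assms(3) unfolding is_clique_def by auto
        ultimately show False
          using assms(2) unfolding triangle_free_def by blast
      qed
    qed
    have "E u v" using u v assms(3) unfolding is_clique_def by simp
    moreover have "A = {u, v}" using \<open>A \<subseteq> {u, v}\<close> u v by blast
    ultimately show ?thesis by (rule that(3))
  qed
qed (rule that(1))

lemma blowup_verts_eq_Sigma: "blowup_verts V n = Sigma V (\<lambda>v. {..<n v})"
  unfolding blowup_verts_def by auto

lemma finite_blowup_verts: "finite V \<Longrightarrow> finite (blowup_verts V n)"
  unfolding blowup_verts_eq_Sigma by auto

lemma simple_graph_blowup:
  "simple_graph V E \<Longrightarrow> simple_graph (blowup_verts V n) (blowup_adj V E n)"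
  unfolding simple_graph_def blowup_adj_def by (auto intro: finite_blowup_verts)

lemma clique_number_blowup_ge:
  assumes "simple_graph V E" "is_clique V E A"
  shows "(\<Sum>v\<in>A. n v) \<le> clique_number (blowup_verts V n) (blowup_adj V E n)"
proof -
  have fin: "finite V" "finite A"
    using assms finite_subset unfolding simple_graph_def is_clique_def by auto
  have "is_clique (blowup_verts V n) (blowup_adj V E n) (Sigma A (\<lambda>v. {..<n v}))"
    using assms(2) unfolding is_clique_def blowup_adj_def blowup_verts_def by auto
  from clique_number_ge[OF finite_blowup_verts[OF fin(1)] this] show ?thesis
    using fin(2) by (simp add: card_SigmaI)
qed

lemma clique_number_blowup_le:
  assumes "simple_graph V E" "triangle_free V E"
    and "\<And>v. v \<in> V \<Longrightarrow> n v \<le> B" and "\<And>u v. E u v \<Longrightarrow> n u + n v \<le> B"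
  shows "clique_number (blowup_verts V n) (blowup_adj V E n) \<le> B"
proof (rule clique_number_le)
  show "finite (blowup_verts V n)"
    using assms(1) finite_blowup_verts unfolding simple_graph_def by blast
next
  fix K assume K: "is_clique (blowup_verts V n) (blowup_adj V E n) K"
  have "is_clique V E (fst ` K)"
    using K unfolding is_clique_def blowup_adj_def blowup_verts_def by force
  then have fin: "finite (fst ` K)"
    using assms(1) finite_subset unfolding simple_graph_def is_clique_def by blast
  have "K \<subseteq> Sigma (fst ` K) (\<lambda>v. {..<n v})"
    using K unfolding is_clique_def blowup_verts_def by force
  then have "card K \<le> (\<Sum>v\<in>fst ` K. n v)"
    using fin card_mono[of "Sigma (fst ` K) (\<lambda>v. {..<n v})" K] by (simp add: card_SigmaI)
  also have "\<dots> \<le> B"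
  proof (cases rule: triangle_free_clique_cases[OF assms(1,2) \<open>is_clique V E (fst ` K)\<close>])
    case (3 u v)
    then have "u \<noteq> v" using assms(1) unfolding simple_graph_def by blast
    then show ?thesis using 3 assms(4) by simp
  qed (use assms(3) in auto)
  finally show "card K \<le> B" .
qed

lemma chromatic_number_le: "proper_colouring V E k c \<Longrightarrow> chromatic_number V E \<le> k"
  unfolding chromatic_number_def by (blast intro: Least_le)

lemma proper_colouring_chromatic_number:
  assumes "simple_graph V E"
  obtains c where "proper_colouring V E (chromatic_number V E) c"
proof -
  have "finite V" using assms unfolding simple_graph_def by blast
  then obtain f where f: "bij_betw f V {0..<card V}"
    using ex_bij_betw_finite_nat by blast
  have "proper_colouring V E (card V) f"
    unfolding proper_colouring_def
  proof (intro conjI ballI impI)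
    fix x assume "x \<in> V"
    then show "f x < card V" using f by (auto simp: bij_betw_def)
  next
    fix x y assume "x \<in> V" "y \<in> V" "E x y"
    moreover have "x \<noteq> y" using \<open>E x y\<close> assms unfolding simple_graph_def by blast
    ultimately show "f x \<noteq> f y" using bij_betw_imp_inj_on[OF f] by (auto dest: inj_onD)
  qed
  then have "\<exists>k c. proper_colouring V E k c" by blast
  then have "\<exists>c. proper_colouring V E (chromatic_number V E) c"
    unfolding chromatic_number_def by (rule LeastI_ex)
  then show ?thesis using that by blast
qed

lemma proper_colouring_comp:
  assumes "proper_colouring V' E' k c" "f ` V \<subseteq> V'"
    and "\<And>x y. x \<in> V \<Longrightarrow> y \<in> V \<Longrightarrow> E x y \<Longrightarrow> E' (f x) (f y)"
  shows "proper_colouring V E k (c \<circ> f)"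
  using assms unfolding proper_colouring_def by (fastforce simp: image_subset_iff)

lemma proper_colouring_Un:
  assumes "proper_colouring A E k c" "proper_colouring B E l d"
  shows "proper_colouring (A \<union> B) E (k + l) (\<lambda>x. if x \<in> A then c x else k + d x)"
  unfolding proper_colouring_def
proof (intro conjI ballI impI)
  fix x assume "x \<in> A \<union> B"
  then show "(if x \<in> A then c x else k + d x) < k + l"
    using assms unfolding proper_colouring_def by auto
next
  fix x y assume xy: "x \<in> A \<union> B" "y \<in> A \<union> B" "E x y"
  from assms have c: "\<forall>x\<in>A. c x < k" "\<forall>x\<in>A. \<forall>y\<in>A. E x y \<longrightarrow> c x \<noteq> c y"
    and d: "\<forall>x\<in>B. \<forall>y\<in>B. E x y \<longrightarrow> d x \<noteq> d y"
    unfolding proper_colouring_def by blast+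
  show "(if x \<in> A then c x else k + d x) \<noteq> (if y \<in> A then c y else k + d y)"
  proof (cases "x \<in> A"; cases "y \<in> A")
    assume "x \<in> A" "y \<in> A"
    then show ?thesis using c(2) xy(3) by simp
  next
    assume "x \<in> A" "y \<notin> A"
    then show ?thesis using c(1) by fastforce
  next
    assume "x \<notin> A" "y \<in> A"
    then show ?thesis using c(1) by fastforce
  next
    assume "x \<notin> A" "y \<notin> A"
    then show ?thesis using d xy by simp
  qed
qed


lemma chromatic_number_blowup_le_add:
  assumes "simple_graph V E" "\<And>v. m v \<le> n v"
  shows "chromatic_number (blowup_verts V n) (blowup_adj V E n)
    \<le> chromatic_number (blowup_verts V m) (blowup_adj V E m)
      + chromatic_number (blowup_verts V (\<lambda>v. n v - m v)) (blowup_adj V E (\<lambda>v. n v - m v))"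
    (is "chromatic_number ?Vn ?En \<le> chromatic_number ?Vm ?Em + chromatic_number ?Vd ?Ed")
proof -
  obtain c where c: "proper_colouring ?Vm ?Em (chromatic_number ?Vm ?Em) c"
    using proper_colouring_chromatic_number simple_graph_blowup[OF assms(1)] by blast
  obtain d where d: "proper_colouring ?Vd ?Ed (chromatic_number ?Vd ?Ed) d"
    using proper_colouring_chromatic_number simple_graph_blowup[OF assms(1)] by blast
  define shift where "shift = (\<lambda>(v, i). (v, i - m v))"
  have "proper_colouring ?Vm ?En (chromatic_number ?Vm ?Em) (c \<circ> id)"
    by (rule proper_colouring_comp[OF c]) (auto simp: blowup_adj_def)
  moreover have "proper_colouring (?Vn - ?Vm) ?En (chromatic_number ?Vd ?Ed) (d \<circ> shift)"
    by (rule proper_colouring_comp[OF d])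
      (auto simp: shift_def blowup_adj_def blowup_verts_def)
  ultimately have "\<exists>col. proper_colouring (?Vm \<union> (?Vn - ?Vm)) ?En
      (chromatic_number ?Vm ?Em + chromatic_number ?Vd ?Ed) col"
    by (blast intro: proper_colouring_Un)
  moreover have "?Vm \<union> (?Vn - ?Vm) = ?Vn"
    using assms(2) order.strict_trans2 unfolding blowup_verts_def by auto
  ultimately show ?thesis
    by (metis chromatic_number_le)
qed

lemma blowup_clique_split:
  assumes "simple_graph V E" "triangle_free V E"
    and "2 * q \<le> clique_number (blowup_verts V n) (blowup_adj V E n)"
  obtains m where "\<And>v. m v \<le> n v"
    and "clique_number (blowup_verts V m) (blowup_adj V E m) \<le> 2 * q"
    and "clique_number (blowup_verts V (\<lambda>v. n v - m v)) (blowup_adj V E (\<lambda>v. n v - m v))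
      \<le> clique_number (blowup_verts V n) (blowup_adj V E n) - 2 * q"
proof
  define w where "w = clique_number (blowup_verts V n) (blowup_adj V E n)"
  have "2 * q \<le> w" using assms(3) unfolding w_def .
  have vertex_le: "n v \<le> w" if "v \<in> V" for v
    using clique_number_blowup_ge[OF assms(1), of "{v}" n] that
    unfolding w_def is_clique_def by simp
  have edge_le: "n u + n v \<le> w" if "E u v" for u v
  proof -
    have "u \<noteq> v" "is_clique V E {u, v}"
      using that assms(1) unfolding simple_graph_def is_clique_def by auto
    then show ?thesis
      using clique_number_blowup_ge[OF assms(1), of "{u, v}" n] unfolding w_def by simp
  qed
  let ?m = "\<lambda>v. window_part q (window_centre w (n v)) (n v)"
  show "?m v \<le> n v" for v
    by (intro window_part_le window_centre_bounds(1) \<open>2 * q \<le> w\<close>)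
  show "clique_number (blowup_verts V ?m) (blowup_adj V E ?m) \<le> 2 * q"
  proof (rule clique_number_blowup_le[OF assms(1,2)])
    fix u v assume "E u v"
    then show "?m u + ?m v \<le> 2 * q"
      by (intro window_part_add_le window_centre_add(1) edge_le)
  qed (rule window_part_le_2q)
  show "clique_number (blowup_verts V (\<lambda>v. n v - ?m v)) (blowup_adj V E (\<lambda>v. n v - ?m v))
      \<le> w - 2 * q"
  proof (rule clique_number_blowup_le[OF assms(1,2)])
    fix v assume "v \<in> V"
    then show "n v - ?m v \<le> w - 2 * q"
      by (intro window_part_rest_le window_centre_bounds(2) vertex_le \<open>2 * q \<le> w\<close>)
  next
    fix u v assume "E u v"
    then show "(n u - ?m u) + (n v - ?m v) \<le> w - 2 * q"
      by (intro window_part_rest_add_le window_centre_bounds(1) window_centre_add(2) edge_le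
          \<open>2 * q \<le> w\<close>)
  qed
qed

lemma blowup_chromatic_bound_from_small_cliques:
  fixes p q :: nat
  assumes "q > 0" "simple_graph V E" "triangle_free V E"
    and small: "\<And>n. clique_number (blowup_verts V n) (blowup_adj V E n) \<le> 2 * q \<Longrightarrow>
      int (chromatic_number (blowup_verts V n) (blowup_adj V E n))
        \<le> \<lceil>real p / (2 * real q) * real (clique_number (blowup_verts V n) (blowup_adj V E n))\<rceil>"
  shows "int (chromatic_number (blowup_verts V n) (blowup_adj V E n))
    \<le> \<lceil>real p / (2 * real q) * real (clique_number (blowup_verts V n) (blowup_adj V E n))\<rceil>"
proof (induction "clique_number (blowup_verts V n) (blowup_adj V E n)" arbitrary: n
    rule: less_induct)
  case less
  let ?r = "real p / (2 * real q)"
  let ?w = "clique_number (blowup_verts V n) (blowup_adj V E n)"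
  show ?case
  proof (cases "?w \<le> 2 * q")
    case True
    then show ?thesis by (rule small)
  next
    case False
    then obtain m where mn: "\<And>v. m v \<le> n v"
      and m: "clique_number (blowup_verts V m) (blowup_adj V E m) \<le> 2 * q"
      and d: "clique_number (blowup_verts V (\<lambda>v. n v - m v)) (blowup_adj V E (\<lambda>v. n v - m v))
        \<le> ?w - 2 * q"
      using blowup_clique_split[OF assms(2,3)] by (metis nat_le_linear)
    have "0 \<le> ?r" by simp
    have "int (chromatic_number (blowup_verts V m) (blowup_adj V E m))
        \<le> \<lceil>?r * clique_number (blowup_verts V m) (blowup_adj V E m)\<rceil>"
      using small[OF m] .
    also have "\<dots> \<le> \<lceil>?r * (2 * q)\<rceil>"
      using m \<open>0 \<le> ?r\<close> by (intro ceiling_mono mult_left_mono) simp_all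
    also have "\<dots> = int p" using assms(1) by simp
    finally have colour_m: "int (chromatic_number (blowup_verts V m) (blowup_adj V E m)) \<le> p" .
    let ?d = "\<lambda>v. n v - m v"
    have "clique_number (blowup_verts V ?d) (blowup_adj V E ?d) < ?w"
      using d False assms(1) by linarith
    then have "int (chromatic_number (blowup_verts V ?d) (blowup_adj V E ?d))
        \<le> \<lceil>?r * clique_number (blowup_verts V ?d) (blowup_adj V E ?d)\<rceil>"
      by (rule less)
    also have "\<dots> \<le> \<lceil>?r * real (?w - 2 * q)\<rceil>"
      using d \<open>0 \<le> ?r\<close> by (intro ceiling_mono mult_left_mono) simp_all
    also have "\<dots> = \<lceil>?r * ?w - of_int (int p)\<rceil>"
      using assms(1) False by (simp add: of_nat_diff field_simps)
    also have "\<dots> = \<lceil>?r * ?w\<rceil> - int p"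
      by (rule ceiling_diff_of_int)
    finally show ?thesis
      using colour_m chromatic_number_blowup_le_add[of V E m n, OF assms(2) mn] by linarith
  qed
qed

theorem theorem1p1:
  fixes p q :: nat and V :: "'a set" and E :: "'a \<Rightarrow> 'a \<Rightarrow> bool"
  assumes "q > 0" and "p > 2 * q"
    and "simple_graph V E" and "triangle_free V E"
  shows "(\<forall>n. int (chromatic_number (blowup_verts V n) (blowup_adj V E n))
            \<le> \<lceil>real p / (2 * real q) * real (clique_number (blowup_verts V n) (blowup_adj V E n))\<rceil>)
     \<longleftrightarrow>
     (\<forall>n. real (clique_number (blowup_verts V n) (blowup_adj V E n))
            \<le> max (2 * real q * (real p - real q - 2) / (real p - 2 * real q)) (2 * real q)
          \<longrightarrow> int (chromatic_number (blowup_verts V n) (blowup_adj V E n))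
            \<le> \<lceil>real p / (2 * real q) * real (clique_number (blowup_verts V n) (blowup_adj V E n))\<rceil>)"
proof -
  \<comment> \<open>Any threshold \<open>\<ge> 2q\<close> would do.\<close>
  have below_threshold:
    "real k \<le> max (2 * real q * (real p - real q - 2) / (real p - 2 * real q)) (2 * real q)"
    if "k \<le> 2 * q" for k :: nat
    using that by simp
  show ?thesis
    using blowup_chromatic_bound_from_small_cliques[OF assms(1,3,4)] below_threshold by blast
qed

end
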